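(* For any $a\in\{1,\dots,2m\}$, $$\sum_{b=1}^{2m}\Big\{|\det\Gamma|^{1/2}(\Gamma^{-1})_{a,b},\,\Xi_b\Big\}=0,$$ on any open set where $\Gamma$ is invertible.
   Context: $\Xi=(\Xi_1,\dots,\Xi_{2m}):\mathbb{R}^{6N}\to\mathbb{R}^{2m}$ denotes the generalized constraints, either $\Xi(q,p)=(\xi(q),v_\xi(q,p))$ or $\Xi(q,p)=(\xi(q),p_\xi(q,p))$, where $\xi:\mathbb{R}^{3N}\to\mathbb{R}^m$ is smooth, $M$ is a constant symmetric positive definite matrix, $v_\xi=\nabla\xi^TM^{-1}p$, $G_M=\nabla\xi^TM^{-1}\nabla\xi$ (invertible) and $p_\xi=G_M^{-1}v_\xi$. $J=\begin{pmatrix}0&\mathrm{Id}_{3N}\\-\mathrm{Id}_{3N}&0\end{pmatrix}$; for scalar smooth $f,g$ on $\mathbb{R}^{6N}$, $\{f,g\}=\nabla f^TJ\nabla g$, and $\Gamma=(\{\Xi_a,\Xi_b\})_{a,b}=\nabla\Xi^TJ\nabla\Xi\in\mathbb{R}^{2m\times2m}$. *)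

theory Defs
  imports "HOL-Analysis.Analysis"
begin

definition dd :: "('a::real_normed_vector \<Rightarrow> real) \<Rightarrow> 'a \<Rightarrow> 'a \<Rightarrow> real" where
  "dd f v x = frechet_derivative f (at x) v"

fun Ck :: "nat \<Rightarrow> ('a::real_normed_vector \<Rightarrow> real) \<Rightarrow> bool" where
  "Ck 0 f = continuous_on UNIV f"
| "Ck (Suc k) f = ((\<forall>x. f differentiable (at x)) \<and> (\<forall>v. Ck k (\<lambda>x. dd f v x)))"

definition smooth_fun :: "('a::real_normed_vector \<Rightarrow> real) \<Rightarrow> bool" where
  "smooth_fun f = (\<forall>k. Ck k f)"

definition poisson ::
  "((real^'n) \<times> (real^'n) \<Rightarrow> real) \<Rightarrow> ((real^'n) \<times> (real^'n) \<Rightarrow> real) \<Rightarrow> (real^'n) \<times> (real^'n) \<Rightarrow> real" where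
  "poisson f g z = (\<Sum>i\<in>UNIV.
      dd f (axis i 1, 0) z * dd g (0, axis i 1) z - dd f (0, axis i 1) z * dd g (axis i 1, 0) z)"

definition grad_xi :: "(real^'n \<Rightarrow> real^'m) \<Rightarrow> 'm \<Rightarrow> real^'n \<Rightarrow> real^'n" where
  "grad_xi \<xi> j q = (\<chi> i. dd (\<lambda>y. \<xi> y $ j) (axis i 1) q)"

definition v_xi :: "(real^'n \<Rightarrow> real^'m) \<Rightarrow> real^'n^'n \<Rightarrow> real^'n \<Rightarrow> real^'n \<Rightarrow> real^'m" where
  "v_xi \<xi> M q p = (\<chi> j. grad_xi \<xi> j q \<bullet> (matrix_inv M *v p))"

definition G_M :: "(real^'n \<Rightarrow> real^'m) \<Rightarrow> real^'n^'n \<Rightarrow> real^'n \<Rightarrow> real^'m^'m" where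
  "G_M \<xi> M q = (\<chi> j k. grad_xi \<xi> j q \<bullet> (matrix_inv M *v grad_xi \<xi> k q))"

definition p_xi :: "(real^'n \<Rightarrow> real^'m) \<Rightarrow> real^'n^'n \<Rightarrow> real^'n \<Rightarrow> real^'n \<Rightarrow> real^'m" where
  "p_xi \<xi> M q p = matrix_inv (G_M \<xi> M q) *v v_xi \<xi> M q p"

text \<open>Generalized constraints, indexed by 'm + 'm (2m indices):
  Inl j gives xi_j, Inr j gives the j-th velocity/momentum constraint.\<close>
definition Xi_v :: "(real^'n \<Rightarrow> real^'m) \<Rightarrow> real^'n^'n \<Rightarrow> (real^'n) \<times> (real^'n) \<Rightarrow> real^('m + 'm)" where
  "Xi_v \<xi> M z = (\<chi> a. case a of Inl j \<Rightarrow> \<xi> (fst z) $ j | Inr j \<Rightarrow> v_xi \<xi> M (fst z) (snd z) $ j)"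

definition Xi_p :: "(real^'n \<Rightarrow> real^'m) \<Rightarrow> real^'n^'n \<Rightarrow> (real^'n) \<times> (real^'n) \<Rightarrow> real^('m + 'm)" where
  "Xi_p \<xi> M z = (\<chi> a. case a of Inl j \<Rightarrow> \<xi> (fst z) $ j | Inr j \<Rightarrow> p_xi \<xi> M (fst z) (snd z) $ j)"

definition Gamma :: "((real^'n) \<times> (real^'n) \<Rightarrow> real^'k) \<Rightarrow> (real^'n) \<times> (real^'n) \<Rightarrow> real^'k^'k" where
  "Gamma \<Xi> z = (\<chi> a b. poisson (\<lambda>w. \<Xi> w $ a) (\<lambda>w. \<Xi> w $ b) z)"

end

theory Submission
  imports Defs
begin

text \<open>Write \<open>s = |det \<Gamma>|^(1/2)\<close> and \<open>P = \<Gamma>\<inverse>\<close>. Jacobi's formula for the derivative of a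
  determinant and the derivative \<open>dP = - P d\<Gamma> P\<close> of the inverse give
  \<open>{s P\<^sub>a\<^sub>b, \<Xi>\<^sub>b} = \<Sum>\<^sub>k\<^sub>c (- s P\<^sub>a\<^sub>k P\<^sub>c\<^sub>b + s/2 P\<^sub>a\<^sub>b P\<^sub>c\<^sub>k) T\<^sub>k\<^sub>c\<^sub>b\<close> with
  \<open>T\<^sub>k\<^sub>c\<^sub>b = {{\<Xi>\<^sub>k, \<Xi>\<^sub>c}, \<Xi>\<^sub>b}\<close>. These brackets are skew in \<open>k, c\<close> and their cyclic sum
  vanishes by the Jacobi identity, which in turn rests on the symmetry of second derivatives. Together
  with the skewness of \<open>P\<close> this makes the first contraction exactly half of the second, so the sum
  over \<open>b\<close> is zero.\<close>

lemma dd_eqI: "(f has_derivative f') (at x) \<Longrightarrow> dd f v x = f' v"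
  unfolding dd_def using frechet_derivative_at by metis

lemma has_derivative_dd: "f differentiable (at x) \<Longrightarrow> (f has_derivative (\<lambda>v. dd f v x)) (at x)"
  unfolding dd_def using frechet_derivative_works by (metis eta_contract_eq)

lemma linear_dd: "f differentiable (at x) \<Longrightarrow> linear (\<lambda>v. dd f v x)"
  using has_derivative_dd has_derivative_linear by blast

lemma dd_const [simp]: "dd (\<lambda>x. c) v x = 0"
  by (rule dd_eqI) (rule has_derivative_const)

lemma dd_cong_open:
  assumes "open S" "x \<in> S" "\<And>y. y \<in> S \<Longrightarrow> f y = g y"
  shows "dd f v x = dd g v x"
proof -
  have "(f has_derivative f') (at x) \<longleftrightarrow> (g has_derivative f') (at x)" for f'
    using has_derivative_transform_within_open[OF _ assms(1,2), where f=f and g=g]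
      has_derivative_transform_within_open[OF _ assms(1,2), where f=g and g=f] assms(3) by metis
  then show ?thesis unfolding dd_def frechet_derivative_def by simp
qed

abbreviation dd2 :: "('a::real_normed_vector \<Rightarrow> real) \<Rightarrow> 'a \<Rightarrow> 'a \<Rightarrow> 'a \<Rightarrow> real" where
  "dd2 f u v x \<equiv> dd (\<lambda>y. dd f u y) v x"

fun ck_on :: "nat \<Rightarrow> 'a::real_normed_vector set \<Rightarrow> ('a \<Rightarrow> real) \<Rightarrow> bool" where
  "ck_on 0 S f = continuous_on S f"
| "ck_on (Suc k) S f = ((\<forall>x\<in>S. f differentiable (at x)) \<and> (\<forall>v. ck_on k S (\<lambda>x. dd f v x)))"

lemma ck_on_2D:
  assumes "ck_on 2 S f"
  shows "x \<in> S \<Longrightarrow> f differentiable (at x)"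
    and "x \<in> S \<Longrightarrow> (\<lambda>y. dd f u y) differentiable (at x)"
    and "continuous_on S (\<lambda>x. dd2 f u v x)"
  using assms by (simp_all add: numeral_2_eq_2)

lemma ck_on_cong:
  assumes "open S" "\<And>y. y \<in> S \<Longrightarrow> f y = g y" "ck_on k S f"
  shows "ck_on k S g"
  using assms(2,3)
proof (induction k arbitrary: f g)
  case 0
  then show ?case using continuous_on_cong by force
next
  case (Suc k)
  have "g differentiable (at x)" if x: "x \<in> S" for x
  proof -
    obtain D where "(f has_derivative D) (at x)"
      using Suc.prems(2) x by (auto simp: differentiable_def)
    then have "(g has_derivative D) (at x)"
      using has_derivative_transform_within_open[where f=f and g=g, OF _ assms(1) x] Suc.prems(1) by blast
    then show ?thesis unfolding differentiable_def by blast
  qed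
  moreover have "ck_on k S (\<lambda>x. dd g v x)" for v
    by (rule Suc.IH[of "\<lambda>x. dd f v x"])
      (use Suc.prems dd_cong_open[OF assms(1), of _ f g] in auto)
  ultimately show ?case by simp
qed

lemma ck_on_SucI:
  assumes "open S" "\<And>x. x \<in> S \<Longrightarrow> F differentiable (at x)"
    and "\<And>v. ck_on k S (G v)" "\<And>v x. x \<in> S \<Longrightarrow> dd F v x = G v x"
  shows "ck_on (Suc k) S F"
  using assms ck_on_cong[OF assms(1), of "G v" "\<lambda>x. dd F v x" k for v] by auto

lemma ck_on_Suc_imp: "ck_on (Suc k) S f \<Longrightarrow> ck_on k S f"
proof (induction k arbitrary: f)
  case 0
  then show ?case
    by (auto intro!: continuous_at_imp_continuous_on differentiable_imp_continuous_within)
next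
  case (Suc k)
  then show ?case by simp
qed

lemma ck_on_const: "ck_on k S (\<lambda>x. c)"
  by (induction k arbitrary: c) (simp_all add: dd_const[abs_def])

lemma ck_on_linear:
  assumes L: "bounded_linear L"
  shows "ck_on k S L"
proof (cases k)
  case 0
  then show ?thesis using L by (simp add: linear_continuous_on)
next
  case (Suc k')
  have "dd L v = (\<lambda>x. L v)" for v
    by (rule ext, rule dd_eqI) (rule bounded_linear_imp_has_derivative[OF L])
  then show ?thesis
    using Suc by (simp add: ck_on_const bounded_linear_imp_differentiable[OF L])
qed

lemma ck_on_add: "open S \<Longrightarrow> ck_on k S f \<Longrightarrow> ck_on k S g \<Longrightarrow> ck_on k S (\<lambda>x. f x + g x)"
proof (induction k arbitrary: f g)
  case 0 then show ?case by (auto intro: continuous_intros)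
next
  case (Suc k)
  show ?case
  proof (rule ck_on_SucI[OF Suc.prems(1), where G="\<lambda>v x. dd f v x + dd g v x"])
    fix x assume "x \<in> S"
    then have d: "f differentiable (at x)" "g differentiable (at x)" using Suc.prems by auto
    then show "(\<lambda>x. f x + g x) differentiable (at x)" by auto
    show "dd (\<lambda>x. f x + g x) v x = dd f v x + dd g v x" for v
      by (rule dd_eqI) (intro has_derivative_add has_derivative_dd d)
  qed (use Suc in simp)
qed

lemma ck_on_mult: "open S \<Longrightarrow> ck_on k S f \<Longrightarrow> ck_on k S g \<Longrightarrow> ck_on k S (\<lambda>x. f x * g x)"
proof (induction k arbitrary: f g)
  case 0 then show ?case by (auto intro: continuous_intros)
next
  case (Suc k)
  show ?case
  proof (rule ck_on_SucI[OF Suc.prems(1), where G="\<lambda>v x. f x * dd g v x + dd f v x * g x"])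
    fix x assume "x \<in> S"
    then have d: "f differentiable (at x)" "g differentiable (at x)" using Suc.prems by auto
    then show "(\<lambda>x. f x * g x) differentiable (at x)" by auto
    show "dd (\<lambda>x. f x * g x) v x = f x * dd g v x + dd f v x * g x" for v
      by (rule dd_eqI) (intro has_derivative_mult has_derivative_dd d)
  next
    fix v
    have "ck_on k S f" "ck_on k S g" using Suc.prems ck_on_Suc_imp by blast+
    then show "ck_on k S (\<lambda>x. f x * dd g v x + dd f v x * g x)"
      using Suc by (simp add: ck_on_add)
  qed
qed

lemma ck_on_diff: "open S \<Longrightarrow> ck_on k S f \<Longrightarrow> ck_on k S g \<Longrightarrow> ck_on k S (\<lambda>x. f x - g x)"
proof -
  assume S: "open S" and f: "ck_on k S f" and g: "ck_on k S g"
  have "ck_on k S (\<lambda>x. (-1) * g x)" by (rule ck_on_mult[OF S ck_on_const g])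
  from ck_on_add[OF S f this] show ?thesis by simp
qed

lemma ck_on_sum: "open S \<Longrightarrow> (\<And>i. i \<in> I \<Longrightarrow> ck_on k S (f i)) \<Longrightarrow> ck_on k S (\<lambda>x. \<Sum>i\<in>I. f i x)"
  by (induction I rule: infinite_finite_induct) (simp_all add: ck_on_const ck_on_add)

lemma ck_on_prod: "open S \<Longrightarrow> (\<And>i. i \<in> I \<Longrightarrow> ck_on k S (f i)) \<Longrightarrow> ck_on k S (\<lambda>x. \<Prod>i\<in>I. f i x)"
  by (induction I rule: infinite_finite_induct) (simp_all add: ck_on_const ck_on_mult)

lemma ck_on_inverse:
  "open S \<Longrightarrow> ck_on k S f \<Longrightarrow> (\<And>x. x \<in> S \<Longrightarrow> f x \<noteq> 0) \<Longrightarrow> ck_on k S (\<lambda>x. inverse (f x))"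
proof (induction k arbitrary: f)
  case 0 then show ?case by (auto intro: continuous_intros)
next
  case (Suc k)
  show ?case
  proof (rule ck_on_SucI[OF Suc.prems(1), where G="\<lambda>v x. - (inverse (f x) * dd f v x * inverse (f x))"])
    fix x assume x: "x \<in> S"
    then have "f differentiable (at x)" using Suc.prems by auto
    then have "((\<lambda>x. inverse (f x)) has_derivative (\<lambda>v. - (inverse (f x) * dd f v x * inverse (f x)))) (at x)"
      by (intro Deriv.has_derivative_inverse has_derivative_dd Suc.prems(3) x)
    then show "(\<lambda>x. inverse (f x)) differentiable (at x)"
      and "dd (\<lambda>x. inverse (f x)) v x = - (inverse (f x) * dd f v x * inverse (f x))" for v
      by (auto simp: differentiable_def dd_eqI)
  next
    fix v
    have "ck_on k S (\<lambda>x. inverse (f x))" using Suc ck_on_Suc_imp by blast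
    then have "ck_on k S (\<lambda>x. inverse (f x) * dd f v x * inverse (f x))"
      using Suc.prems by (simp add: ck_on_mult)
    from ck_on_diff[OF Suc.prems(1) ck_on_const[of k S 0] this]
    show "ck_on k S (\<lambda>x. - (inverse (f x) * dd f v x * inverse (f x)))" by simp
  qed
qed

lemma ck_on_divide:
  "open S \<Longrightarrow> ck_on k S f \<Longrightarrow> ck_on k S g \<Longrightarrow> (\<And>x. x \<in> S \<Longrightarrow> g x \<noteq> 0) \<Longrightarrow> ck_on k S (\<lambda>x. f x / g x)"
  unfolding divide_inverse by (intro ck_on_mult ck_on_inverse)

lemma ck_on_compose_linear:
  assumes "Ck k g" "bounded_linear L" "open S"
  shows "ck_on k S (\<lambda>z. g (L z))"
  using assms(1)
proof (induction k arbitrary: g)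
  case 0
  then show ?case
    using continuous_on_compose2[OF _ linear_continuous_on[OF assms(2)], where g=g and s=S] by simp
next
  case (Suc k)
  have deriv: "((\<lambda>z. g (L z)) has_derivative (\<lambda>v. dd g (L v) (L z))) (at z)" for z
    using diff_chain_at[OF bounded_linear_imp_has_derivative[OF assms(2)] has_derivative_dd, of g z]
      Suc.prems by (simp add: o_def)
  show ?case
  proof (rule ck_on_SucI[OF assms(3), where G="\<lambda>v z. dd g (L v) (L z)"])
    show "(\<lambda>z. g (L z)) differentiable (at x)" for x
      using deriv unfolding differentiable_def by blast
    show "dd (\<lambda>z. g (L z)) v x = dd g (L v) (L x)" for v x
      by (rule dd_eqI[OF deriv])
  qed (use Suc in simp)
qed

lemma matrix_inv_right: "invertible A \<Longrightarrow> A ** matrix_inv A = mat 1"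
  and matrix_inv_left: "invertible A \<Longrightarrow> matrix_inv A ** A = mat 1"
  using someI_ex[of "\<lambda>A'. A ** A' = mat 1 \<and> A' ** A = mat 1"]
  unfolding invertible_def matrix_inv_def by auto

lemma matrix_inv_cramer:
  fixes A :: "real^'k^'k"
  assumes "invertible A"
  shows "matrix_inv A $ a $ b = det (\<chi> i l. if l = a then axis b 1 $ i else A $ i $ l) / det A"
proof -
  have "A *v (matrix_inv A *v axis b 1) = axis b 1"
    by (simp add: matrix_vector_mul_assoc matrix_inv_right[OF assms])
  then have "matrix_inv A *v axis b 1 = (\<chi> k. det (\<chi> i j. if j = k then axis b 1 $ i else A $ i $ j) / det A)"
    using cramer[OF invertible_det_nz[THEN iffD1, OF assms]] by blast
  then show ?thesis
    by (metis (no_types, lifting) column_def matrix_vector_mult_basis vec_lambda_beta)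
qed

lemma matrix_inv_skew:
  fixes G :: "real^'k^'k"
  assumes inv: "invertible G" and skew: "transpose G = - G"
  shows "matrix_inv G $ a $ b = - matrix_inv G $ b $ a"
proof -
  let ?P = "matrix_inv G"
  have "transpose ?P ** - G = mat 1"
    by (metis skew matrix_inv_right[OF inv] matrix_transpose_mul transpose_mat)
  then have left_inv: "(- transpose ?P) ** G = mat 1"
    by (simp add: matrix_matrix_mult_def sum_negf)
  have "- transpose ?P = (- transpose ?P) ** (G ** ?P)"
    by (simp add: matrix_inv_right[OF inv])
  also have "\<dots> = ?P"
    by (simp add: matrix_mul_assoc left_inv)
  finally have "(- transpose ?P) $ a $ b = ?P $ a $ b" by simp
  then show ?thesis by (simp add: transpose_def)
qed

lemma ck_on_det:
  fixes A :: "'a::real_normed_vector \<Rightarrow> real^'k^'k"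
  assumes "open S" "\<And>i j. ck_on k S (\<lambda>x. A x $ i $ j)"
  shows "ck_on k S (\<lambda>x. det (A x))"
  unfolding det_def
  by (intro ck_on_sum[OF assms(1)] ck_on_mult[OF assms(1)] ck_on_const ck_on_prod[OF assms(1)] assms(2))

lemma ck_on_matrix_inv:
  fixes A :: "'a::real_normed_vector \<Rightarrow> real^'k^'k"
  assumes S: "open S" and A: "\<And>i j. ck_on k S (\<lambda>x. A x $ i $ j)"
    and inv: "\<And>x. x \<in> S \<Longrightarrow> invertible (A x)"
  shows "ck_on k S (\<lambda>x. matrix_inv (A x) $ a $ b)"
proof (rule ck_on_cong[OF S])
  show "det (\<chi> i l. if l = a then axis b 1 $ i else A y $ i $ l) / det (A y) = matrix_inv (A y) $ a $ b"
    if "y \<in> S" for y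
    using matrix_inv_cramer[OF inv[OF that]] by simp
  have "ck_on k S (\<lambda>x. (\<chi> i l. if l = a then axis b 1 $ i else A x $ i $ l) $ i $ j)" for i j
    by (cases "j = a") (simp_all add: ck_on_const A)
  then show "ck_on k S (\<lambda>y. det (\<chi> i l. if l = a then axis b 1 $ i else A y $ i $ l) / det (A y))"
    using inv invertible_det_nz by (intro ck_on_divide[OF S] ck_on_det[OF S] A) auto
qed

lemma has_real_derivative_dd_line:
  assumes "f differentiable (at (y + s *\<^sub>R w))"
  shows "((\<lambda>s. f (y + s *\<^sub>R w)) has_real_derivative dd f w (y + s *\<^sub>R w)) (at s)"
proof -
  have "((f \<circ> (\<lambda>s. y + s *\<^sub>R w)) has_derivative ((\<lambda>v. dd f v (y + s *\<^sub>R w)) \<circ> (\<lambda>h. h *\<^sub>R w))) (at s)"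
    by (intro diff_chain_at has_derivative_dd assms derivative_eq_intros) auto
  moreover have "(\<lambda>v. dd f v (y + s *\<^sub>R w)) \<circ> (\<lambda>h. h *\<^sub>R w) = (*) (dd f w (y + s *\<^sub>R w))"
    using linear_scale[OF linear_dd[OF assms]] by (auto simp: mult.commute)
  ultimately show ?thesis unfolding has_field_derivative_def o_def by simp
qed

lemma second_difference_mvt:
  assumes f: "ck_on 2 S f" and ball: "ball x r \<subseteq> S"
    and t: "0 < t" "t * (norm u + norm v) < r"
  shows "\<exists>\<sigma> \<tau>. 0 < \<sigma> \<and> \<sigma> < t \<and> 0 < \<tau> \<and> \<tau> < t \<and>
     f (x + t *\<^sub>R u + t *\<^sub>R v) - f (x + t *\<^sub>R u) - f (x + t *\<^sub>R v) + f x
       = t * t * dd2 f u v (x + \<sigma> *\<^sub>R u + \<tau> *\<^sub>R v)"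
proof -
  have inS: "x + a *\<^sub>R u + b *\<^sub>R v \<in> S" if "0 \<le> a" "a \<le> t" "0 \<le> b" "b \<le> t" for a b
  proof -
    have "norm (a *\<^sub>R u + b *\<^sub>R v) \<le> a * norm u + b * norm v"
      using norm_triangle_ineq[of "a *\<^sub>R u" "b *\<^sub>R v"] that by simp
    also have "\<dots> \<le> t * norm u + t * norm v"
      using that by (intro add_mono mult_right_mono) auto
    also have "\<dots> < r" using t by (simp add: algebra_simps)
    finally have "x + (a *\<^sub>R u + b *\<^sub>R v) \<in> ball x r"
      using dist_add_cancel[of x 0 "a *\<^sub>R u + b *\<^sub>R v"] by simp
    then show ?thesis using ball by (auto simp: add.assoc)
  qed
  note df = ck_on_2D(1)[OF f] and ddf = ck_on_2D(2)[OF f]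
  define \<phi> where "\<phi> s = f ((x + t *\<^sub>R v) + s *\<^sub>R u) - f (x + s *\<^sub>R u)" for s
  have "\<exists>\<sigma>>0. \<sigma> < t \<and> \<phi> t - \<phi> 0 = (t - 0) * (dd f u ((x + t *\<^sub>R v) + \<sigma> *\<^sub>R u) - dd f u (x + \<sigma> *\<^sub>R u))"
  proof (rule MVT2[OF t(1)])
    fix s assume "0 \<le> s" "s \<le> t"
    then have "(x + t *\<^sub>R v) + s *\<^sub>R u \<in> S" "x + s *\<^sub>R u \<in> S"
      using inS[of s t] inS[of s 0] t by (simp_all add: algebra_simps)
    then show "(\<phi> has_real_derivative (dd f u ((x + t *\<^sub>R v) + s *\<^sub>R u) - dd f u (x + s *\<^sub>R u))) (at s)"
      unfolding \<phi>_def by (intro DERIV_diff has_real_derivative_dd_line df)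
  qed
  then obtain \<sigma> where \<sigma>: "0 < \<sigma>" "\<sigma> < t"
    and e1: "\<phi> t - \<phi> 0 = t * (dd f u ((x + \<sigma> *\<^sub>R u) + t *\<^sub>R v) - dd f u ((x + \<sigma> *\<^sub>R u) + 0 *\<^sub>R v))"
    by (auto simp: algebra_simps)
  have "\<exists>\<tau>>0. \<tau> < t \<and> dd f u ((x + \<sigma> *\<^sub>R u) + t *\<^sub>R v) - dd f u ((x + \<sigma> *\<^sub>R u) + 0 *\<^sub>R v)
      = (t - 0) * dd2 f u v ((x + \<sigma> *\<^sub>R u) + \<tau> *\<^sub>R v)"
  proof (rule MVT2[OF t(1)])
    fix s assume "0 \<le> s" "s \<le> t"
    then have "(x + \<sigma> *\<^sub>R u) + s *\<^sub>R v \<in> S" using inS[of \<sigma> s] \<sigma> by simp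
    then show "((\<lambda>s. dd f u ((x + \<sigma> *\<^sub>R u) + s *\<^sub>R v)) has_real_derivative dd2 f u v ((x + \<sigma> *\<^sub>R u) + s *\<^sub>R v)) (at s)"
      by (intro has_real_derivative_dd_line ddf)
  qed
  then obtain \<tau> where "0 < \<tau>" "\<tau> < t"
    and "dd f u ((x + \<sigma> *\<^sub>R u) + t *\<^sub>R v) - dd f u ((x + \<sigma> *\<^sub>R u) + 0 *\<^sub>R v)
      = t * dd2 f u v ((x + \<sigma> *\<^sub>R u) + \<tau> *\<^sub>R v)" by auto
  moreover have "f (x + t *\<^sub>R u + t *\<^sub>R v) - f (x + t *\<^sub>R u) - f (x + t *\<^sub>R v) + f x = \<phi> t - \<phi> 0"
    unfolding \<phi>_def by (simp add: algebra_simps)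
  ultimately show ?thesis using \<sigma> e1 by auto
qed

lemma second_difference_tendsto:
  assumes S: "open S" and f: "ck_on 2 S f" and x: "x \<in> S"
  shows "((\<lambda>t. (f (x + t *\<^sub>R u + t *\<^sub>R v) - f (x + t *\<^sub>R u) - f (x + t *\<^sub>R v) + f x) / (t * t))
           \<longlongrightarrow> dd2 f u v x) (at_right 0)"
proof -
  obtain r where r: "r > 0" "ball x r \<subseteq> S" using S x open_contains_ball by blast
  define \<delta> where "\<delta> = r / (norm u + norm v + 1)"
  have pos: "norm u + norm v + 1 > 0" by (smt (verit) norm_ge_zero)
  have \<delta>: "\<delta> > 0" using r pos by (simp add: \<delta>_def)
  have bound: "t * (norm u + norm v) < r" if "0 < t" "t < \<delta>" for t
  proof -
    have "t * (norm u + norm v) \<le> t * (norm u + norm v + 1)" using that by simp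
    also have "\<dots> < \<delta> * (norm u + norm v + 1)"
      using that pos by (intro mult_strict_right_mono) auto
    finally show ?thesis using pos by (simp add: \<delta>_def)
  qed
  define mvt_at where "mvt_at t \<sigma> \<tau> \<longleftrightarrow> (0 < t \<and> t < \<delta> \<longrightarrow> 0 < \<sigma> \<and> \<sigma> < t \<and> 0 < \<tau> \<and> \<tau> < t \<and>
     f (x + t *\<^sub>R u + t *\<^sub>R v) - f (x + t *\<^sub>R u) - f (x + t *\<^sub>R v) + f x
       = t * t * dd2 f u v (x + \<sigma> *\<^sub>R u + \<tau> *\<^sub>R v))" for t \<sigma> \<tau>
  have "\<forall>t. \<exists>\<sigma> \<tau>. mvt_at t \<sigma> \<tau>"
    using second_difference_mvt[OF f r(2)] bound unfolding mvt_at_def by blast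
  then obtain \<sigma> \<tau> where "\<And>t. mvt_at t (\<sigma> t) (\<tau> t)" by metis
  then have mvt_bounds: "0 \<le> \<sigma> t \<and> \<sigma> t \<le> t \<and> 0 \<le> \<tau> t \<and> \<tau> t \<le> t"
    and mvt_eq: "(f (x + t *\<^sub>R u + t *\<^sub>R v) - f (x + t *\<^sub>R u) - f (x + t *\<^sub>R v) + f x) / (t * t)
       = dd2 f u v (x + \<sigma> t *\<^sub>R u + \<tau> t *\<^sub>R v)"
    if "0 < t" "t < \<delta>" for t
    using that unfolding mvt_at_def by fastforce+
  have small: "eventually (\<lambda>t. 0 < t \<and> t < \<delta>) (at_right 0)"
    using \<delta> by (auto simp: eventually_at_right_field)
  have "eventually (\<lambda>t. 0 \<le> \<sigma> t \<and> \<sigma> t \<le> t \<and> 0 \<le> \<tau> t \<and> \<tau> t \<le> t) (at_right 0)"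
    using small by (rule eventually_mono) (use mvt_bounds in blast)
  then have "(\<sigma> \<longlongrightarrow> 0) (at_right 0)" "(\<tau> \<longlongrightarrow> 0) (at_right 0)"
    by (auto elim!: eventually_mono intro: tendsto_sandwich[OF _ _ tendsto_const tendsto_ident_at])
  then have "((\<lambda>t. x + \<sigma> t *\<^sub>R u + \<tau> t *\<^sub>R v) \<longlongrightarrow> x) (at_right 0)"
    by (auto intro!: tendsto_eq_intros)
  moreover have "isCont (dd2 f u v) x"
    using ck_on_2D(3)[OF f] S x by (simp add: continuous_on_eq_continuous_at)
  ultimately have "((\<lambda>t. dd2 f u v (x + \<sigma> t *\<^sub>R u + \<tau> t *\<^sub>R v)) \<longlongrightarrow> dd2 f u v x) (at_right 0)"
    using isCont_tendsto_compose by blast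
  then show ?thesis
    by (rule Lim_transform_eventually) (use small mvt_eq in \<open>auto elim!: eventually_mono\<close>)
qed

text \<open>Schwarz's theorem: both orders of differentiation are limits of the same second difference.\<close>
lemma dd2_commute:
  assumes "open S" "ck_on 2 S f" "x \<in> S"
  shows "dd2 f u v x = dd2 f v u x"
proof (rule tendsto_unique[OF trivial_limit_at_right_real])
  show "((\<lambda>t. (f (x + t *\<^sub>R u + t *\<^sub>R v) - f (x + t *\<^sub>R u) - f (x + t *\<^sub>R v) + f x) / (t * t))
           \<longlongrightarrow> dd2 f u v x) (at_right 0)"
    by (rule second_difference_tendsto[OF assms])
  show "((\<lambda>t. (f (x + t *\<^sub>R u + t *\<^sub>R v) - f (x + t *\<^sub>R u) - f (x + t *\<^sub>R v) + f x) / (t * t))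
           \<longlongrightarrow> dd2 f v u x) (at_right 0)"
    using second_difference_tendsto[OF assms, of v u] by (simp add: algebra_simps)
qed

definition q_axis :: "'n::finite \<Rightarrow> (real^'n) \<times> (real^'n)" where
  "q_axis i = (axis i 1, 0)"

definition p_axis :: "'n::finite \<Rightarrow> (real^'n) \<times> (real^'n)" where
  "p_axis i = (0, axis i 1)"

text \<open>The Hamiltonian vector field \<open>X\<^sub>f = J \<nabla>f\<close>, so that \<open>{f, g} = dg(X\<^sub>f)\<close>.\<close>
definition ham_field :: "((real^'n::finite) \<times> (real^'n) \<Rightarrow> real) \<Rightarrow> (real^'n) \<times> (real^'n) \<Rightarrow> (real^'n) \<times> (real^'n)" where
  "ham_field f z = (\<Sum>i\<in>UNIV. dd f (q_axis i) z *\<^sub>R p_axis i - dd f (p_axis i) z *\<^sub>R q_axis i)"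

lemma poisson_axes:
  "poisson f g = (\<lambda>z. \<Sum>i\<in>UNIV. dd f (q_axis i) z * dd g (p_axis i) z - dd f (p_axis i) z * dd g (q_axis i) z)"
  by (simp add: fun_eq_iff poisson_def q_axis_def p_axis_def)

lemma poisson_skew: "poisson f g z = - poisson g f z"
  unfolding poisson_def by (simp add: sum_negf[symmetric] algebra_simps)

lemma linear_ham_field:
  "linear L \<Longrightarrow> L (ham_field f z) = (\<Sum>i\<in>UNIV. dd f (q_axis i) z * L (p_axis i) - dd f (p_axis i) z * L (q_axis i))"
  by (simp add: ham_field_def linear_sum linear_diff linear_scale)

lemma poisson_eq_dd_ham_field: "g differentiable (at z) \<Longrightarrow> poisson f g z = dd g (ham_field f z) z"
  by (simp add: poisson_axes linear_ham_field[OF linear_dd])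

lemma ck_on_poisson:
  assumes S: "open S" and f: "ck_on (Suc k) S f" and g: "ck_on (Suc k) S g"
  shows "ck_on k S (poisson f g)"
proof -
  have "ck_on k S (\<lambda>x. dd f u x)" "ck_on k S (\<lambda>x. dd g u x)" for u
    using f g by (simp_all only: ck_on.simps)
  then show ?thesis
    unfolding poisson_axes by (intro ck_on_sum[OF S] ck_on_diff[OF S] ck_on_mult[OF S])
qed

lemma linear_dd2_left:
  assumes S: "open S" and f: "ck_on 2 S f" and z: "z \<in> S"
  shows "linear (\<lambda>u. dd2 f u v z)"
proof -
  note df = ck_on_2D(1)[OF f] and ddf = ck_on_2D(2)[OF f z]
  show ?thesis
  proof (rule linearI)
    fix u w
    have "dd2 f (u + w) v z = dd (\<lambda>y. dd f u y + dd f w y) v z"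
      by (rule dd_cong_open[OF S z]) (simp add: linear_add[OF linear_dd] df)
    also have "\<dots> = dd2 f u v z + dd2 f w v z"
      by (rule dd_eqI) (intro has_derivative_add has_derivative_dd ddf)
    finally show "dd2 f (u + w) v z = dd2 f u v z + dd2 f w v z" .
  next
    fix c u
    have "dd2 f (c *\<^sub>R u) v z = dd (\<lambda>y. c * dd f u y) v z"
      by (rule dd_cong_open[OF S z]) (simp add: linear_scale[OF linear_dd] df)
    also have "\<dots> = c * dd2 f u v z"
      by (rule dd_eqI) (intro has_derivative_mult_right has_derivative_dd ddf)
    finally show "dd2 f (c *\<^sub>R u) v z = c *\<^sub>R dd2 f u v z" by simp
  qed
qed

lemma dd_poisson:
  assumes S: "open S" and z: "z \<in> S" and f: "ck_on 2 S f" and g: "ck_on 2 S g"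
  shows "dd (poisson f g) v z = dd2 g (ham_field f z) v z - dd2 f (ham_field g z) v z"
proof -
  note ck_on_2D(2)[OF f z] ck_on_2D(2)[OF g z]
  then have "dd (poisson f g) v z = (\<Sum>i\<in>UNIV.
      dd f (q_axis i) z * dd2 g (p_axis i) v z + dd2 f (q_axis i) v z * dd g (p_axis i) z
    - (dd f (p_axis i) z * dd2 g (q_axis i) v z + dd2 f (p_axis i) v z * dd g (q_axis i) z))"
    unfolding poisson_axes
    by (intro dd_eqI has_derivative_sum has_derivative_diff has_derivative_mult has_derivative_dd)
  then show ?thesis
    by (simp add: linear_ham_field[OF linear_dd2_left[OF S f z]] linear_ham_field[OF linear_dd2_left[OF S g z]]
        sum_subtractf[symmetric] algebra_simps)
qed

lemma poisson_poisson:
  assumes S: "open S" and z: "z \<in> S" and f: "ck_on 2 S f" and g: "ck_on 2 S g" and h: "ck_on 2 S h"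
  shows "poisson (poisson f g) h z
    = dd2 f (ham_field g z) (ham_field h z) z - dd2 g (ham_field f z) (ham_field h z) z"
proof -
  have "ck_on 1 S (poisson f g)"
    using f g by (intro ck_on_poisson[OF S]) (simp_all add: numeral_2_eq_2)
  then have "poisson f g differentiable (at z)" using z by simp
  then have "poisson (poisson f g) h z = - dd (poisson f g) (ham_field h z) z"
    by (simp add: poisson_skew[of _ h] poisson_eq_dd_ham_field)
  then show ?thesis by (simp add: dd_poisson[OF S z f g])
qed

lemma poisson_jacobi:
  assumes S: "open S" and z: "z \<in> S" and f: "ck_on 2 S f" and g: "ck_on 2 S g" and h: "ck_on 2 S h"
  shows "poisson (poisson f g) h z + poisson (poisson g h) f z + poisson (poisson h f) g z = 0"
proof -
  let ?X = "\<lambda>f. ham_field f z"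
  have "dd2 f (?X g) (?X h) z = dd2 f (?X h) (?X g) z"
    and "dd2 g (?X h) (?X f) z = dd2 g (?X f) (?X h) z"
    and "dd2 h (?X f) (?X g) z = dd2 h (?X g) (?X f) z"
    by (rule dd2_commute[OF S _ z]; fact)+
  then show ?thesis
    using poisson_poisson[OF S z f g h] poisson_poisson[OF S z g h f] poisson_poisson[OF S z h f g]
    by linarith
qed

lemma has_real_derivative_sqrt_abs:
  assumes "(D::real) \<noteq> 0"
  shows "((\<lambda>x. sqrt \<bar>x\<bar>) has_real_derivative sqrt \<bar>D\<bar> / (2 * D)) (at D)"
proof -
  have "((\<lambda>x. sqrt (sqrt (x * x))) has_real_derivative sqrt \<bar>D\<bar> / (2 * D)) (at D)"
    by (rule derivative_eq_intros refl | use assms in \<open>simp add: real_sqrt_abs2 field_simps\<close>)+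
  then show ?thesis by (simp add: real_sqrt_abs2)
qed

lemma permutes_id_if_fixes_all_but_one:
  assumes p: "p permutes (UNIV::'k set)" and others: "\<And>i. i \<noteq> j \<Longrightarrow> p i = i"
  shows "p = id"
proof -
  have "p j = j"
    using others permutes_inj[OF p] by (metis injD)
  then have "p i = i" for i using others by (cases "i = j") auto
  then show ?thesis by (simp add: fun_eq_iff)
qed

lemma has_derivative_det_at_identity:
  fixes A :: "'a::real_normed_vector \<Rightarrow> real^'k^'k"
  assumes A': "\<And>i j. ((\<lambda>w. A w $ i $ j) has_derivative A' i j) (at z)" and Az: "A z = mat 1"
  shows "((\<lambda>w. det (A w)) has_derivative (\<lambda>v. \<Sum>j\<in>UNIV. A' j j v)) (at z)"
proof -
  have deriv: "((\<lambda>w. det (A w)) has_derivative (\<lambda>v. \<Sum>p\<in>{p. p permutes UNIV}. of_int (sign p) *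
       (\<Sum>j\<in>UNIV. A' j (p j) v * (\<Prod>i\<in>UNIV-{j}. A z $ i $ p i)))) (at z)"
    unfolding det_def by (intro has_derivative_sum has_derivative_mult_right has_derivative_prod A')
  have summand: "of_int (sign p) * (\<Sum>j\<in>UNIV. A' j (p j) v * (\<Prod>i\<in>UNIV-{j}. A z $ i $ p i))
      = (if p = id then \<Sum>j\<in>UNIV. A' j j v else 0)" if p: "p permutes UNIV" for p v
  proof (cases "p = id")
    case False
    have zero: "(\<Prod>i\<in>UNIV-{j}. A z $ i $ p i) = 0" for j
      using permutes_id_if_fixes_all_but_one[OF p, of j] False by (auto simp: Az mat_def prod_zero_iff)
    show ?thesis using False by (simp only: zero) simp
  qed (simp add: Az mat_def)
  have "(\<Sum>p\<in>{p. p permutes UNIV}. of_int (sign p) *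
       (\<Sum>j\<in>UNIV. A' j (p j) v * (\<Prod>i\<in>UNIV-{j}. A z $ i $ p i))) = (\<Sum>j\<in>UNIV. A' j j v)" for v
  proof -
    have "(\<Sum>p\<in>{p. p permutes UNIV}. of_int (sign p) *
       (\<Sum>j\<in>UNIV. A' j (p j) v * (\<Prod>i\<in>UNIV-{j}. A z $ i $ p i)))
       = (\<Sum>p\<in>{p. p permutes (UNIV::'k set)}. if p = id then \<Sum>j\<in>UNIV. A' j j v else 0)"
      by (rule sum.cong) (auto simp: summand)
    then show ?thesis by (simp add: sum.delta' permutes_id)
  qed
  then show ?thesis using deriv by simp
qed

lemma has_derivative_det:
  fixes A :: "'a::real_normed_vector \<Rightarrow> real^'k^'k"
  assumes A': "\<And>i j. ((\<lambda>w. A w $ i $ j) has_derivative A' i j) (at z)" and inv: "invertible (A z)"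
  shows "((\<lambda>w. det (A w)) has_derivative
           (\<lambda>v. det (A z) * (\<Sum>j\<in>UNIV. \<Sum>k\<in>UNIV. matrix_inv (A z) $ j $ k * A' k j v))) (at z)"
proof -
  let ?P = "matrix_inv (A z)"
  have P_A: "?P ** A z = mat 1" by (rule matrix_inv_left[OF inv])
  have det_A: "det (A w) = det (A z) * det (?P ** A w)" for w
    using det_mul[of ?P "A z"] det_mul[of ?P "A w"] P_A by (simp add: algebra_simps)
  have "((\<lambda>w. (?P ** A w) $ i $ j) has_derivative (\<lambda>v. \<Sum>k\<in>UNIV. ?P $ i $ k * A' k j v)) (at z)" for i j
    unfolding matrix_matrix_mult_def by (simp, intro has_derivative_sum has_derivative_mult_right A')
  from has_derivative_mult_right[OF has_derivative_det_at_identity[OF this P_A], of "det (A z)"]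
  show ?thesis by (simp only: det_A[symmetric])
qed

lemma has_derivative_sqrt_abs_det:
  fixes A :: "'a::real_normed_vector \<Rightarrow> real^'k^'k"
  assumes A': "\<And>i j. ((\<lambda>w. A w $ i $ j) has_derivative A' i j) (at z)" and inv: "invertible (A z)"
  shows "((\<lambda>w. sqrt \<bar>det (A w)\<bar>) has_derivative
           (\<lambda>v. sqrt \<bar>det (A z)\<bar> / 2 * (\<Sum>j\<in>UNIV. \<Sum>k\<in>UNIV. matrix_inv (A z) $ j $ k * A' k j v))) (at z)"
proof -
  have "det (A z) \<noteq> 0" using inv invertible_det_nz by blast
  then show ?thesis
    using DERIV_compose_FDERIV[OF has_real_derivative_sqrt_abs has_derivative_det[OF A' inv]]
    by (simp add: ac_simps)
qed

lemma dd_matrix_inv: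
  fixes A :: "'a::real_normed_vector \<Rightarrow> real^'k^'k"
  assumes S: "open S" and z: "z \<in> S" and A: "\<And>i j. ck_on 1 S (\<lambda>w. A w $ i $ j)"
    and inv: "\<And>w. w \<in> S \<Longrightarrow> invertible (A w)"
  shows "dd (\<lambda>w. matrix_inv (A w) $ a $ b) v z
    = - (\<Sum>c\<in>UNIV. \<Sum>k\<in>UNIV. matrix_inv (A z) $ a $ k * dd (\<lambda>w. A w $ k $ c) v z * matrix_inv (A z) $ c $ b)"
proof -
  let ?P = "matrix_inv (A z)"
  define dP where "dP i k = dd (\<lambda>w. matrix_inv (A w) $ i $ k) v z" for i k
  define dA where "dA k c = dd (\<lambda>w. A w $ k $ c) v z" for k c
  have diff: "(\<lambda>w. A w $ i $ j) differentiable (at z)" "(\<lambda>w. matrix_inv (A w) $ i $ j) differentiable (at z)"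
    for i j
    using A ck_on_matrix_inv[OF S A inv] z by simp_all
  have product_rule: "(\<Sum>k\<in>UNIV. dP a k * A z $ k $ c) = - (\<Sum>k\<in>UNIV. ?P $ a $ k * dA k c)" for c
  proof -
    have "(\<Sum>k\<in>UNIV. matrix_inv (A w) $ a $ k * A w $ k $ c) = mat 1 $ a $ c" if "w \<in> S" for w
      using arg_cong[OF matrix_inv_left[OF inv[OF that]], of "\<lambda>M. M $ a $ c"]
      by (simp add: matrix_matrix_mult_def)
    then have "dd (\<lambda>w. \<Sum>k\<in>UNIV. matrix_inv (A w) $ a $ k * A w $ k $ c) v z = 0"
      using dd_cong_open[OF S z, where g="\<lambda>w. mat 1 $ a $ c"] by simp
    moreover have "dd (\<lambda>w. \<Sum>k\<in>UNIV. matrix_inv (A w) $ a $ k * A w $ k $ c) v z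
        = (\<Sum>k\<in>UNIV. ?P $ a $ k * dA k c + dP a k * A z $ k $ c)"
      unfolding dP_def dA_def by (intro dd_eqI has_derivative_sum has_derivative_mult has_derivative_dd diff)
    ultimately show ?thesis by (simp add: sum.distrib eq_neg_iff_add_eq_0 add.commute)
  qed
  have "dP a b = (\<Sum>k\<in>UNIV. dP a k * (A z ** ?P) $ k $ b)"
    by (simp add: matrix_inv_right[OF inv[OF z]] mat_def if_distrib[of "(*) _"] cong: if_cong)
  also have "\<dots> = (\<Sum>k\<in>UNIV. \<Sum>c\<in>UNIV. dP a k * A z $ k $ c * ?P $ c $ b)"
    by (simp add: matrix_matrix_mult_def sum_distrib_left mult.assoc)
  also have "\<dots> = (\<Sum>c\<in>UNIV. (\<Sum>k\<in>UNIV. dP a k * A z $ k $ c) * ?P $ c $ b)"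
    by (subst sum.swap) (simp add: sum_distrib_right)
  also have "\<dots> = - (\<Sum>c\<in>UNIV. \<Sum>k\<in>UNIV. ?P $ a $ k * dA k c * ?P $ c $ b)"
    by (simp add: product_rule sum_distrib_right sum_negf)
  finally show ?thesis unfolding dP_def dA_def .
qed

lemma has_derivative_sqrt_abs_det_matrix_inv:
  fixes A :: "'a::real_normed_vector \<Rightarrow> real^'k^'k"
  assumes S: "open S" and z: "z \<in> S" and A: "\<And>i j. ck_on 1 S (\<lambda>w. A w $ i $ j)"
    and inv: "\<And>w. w \<in> S \<Longrightarrow> invertible (A w)"
  shows "((\<lambda>w. sqrt \<bar>det (A w)\<bar> * matrix_inv (A w) $ a $ b) has_derivative
      (\<lambda>v. \<Sum>k\<in>UNIV. \<Sum>c\<in>UNIV.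
         (- sqrt \<bar>det (A z)\<bar> * (matrix_inv (A z) $ a $ k * matrix_inv (A z) $ c $ b)
          + sqrt \<bar>det (A z)\<bar> / 2 * (matrix_inv (A z) $ a $ b * matrix_inv (A z) $ c $ k))
         * dd (\<lambda>w. A w $ k $ c) v z)) (at z)"
proof -
  let ?s = "sqrt \<bar>det (A z)\<bar>" and ?P = "matrix_inv (A z)"
  have diff: "(\<lambda>w. A w $ i $ j) differentiable (at z)" "(\<lambda>w. matrix_inv (A w) $ i $ j) differentiable (at z)"
    for i j
    using A ck_on_matrix_inv[OF S A inv] z by simp_all
  have "((\<lambda>w. sqrt \<bar>det (A w)\<bar> * matrix_inv (A w) $ a $ b) has_derivative
      (\<lambda>v. ?s * dd (\<lambda>w. matrix_inv (A w) $ a $ b) v z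
         + ?s / 2 * (\<Sum>j\<in>UNIV. \<Sum>k\<in>UNIV. ?P $ j $ k * dd (\<lambda>w. A w $ k $ j) v z) * ?P $ a $ b)) (at z)"
    by (intro has_derivative_mult has_derivative_sqrt_abs_det has_derivative_dd diff inv z)
  moreover have "?s * dd (\<lambda>w. matrix_inv (A w) $ a $ b) v z
         + ?s / 2 * (\<Sum>j\<in>UNIV. \<Sum>k\<in>UNIV. ?P $ j $ k * dd (\<lambda>w. A w $ k $ j) v z) * ?P $ a $ b
       = (\<Sum>k\<in>UNIV. \<Sum>c\<in>UNIV. (- ?s * (?P $ a $ k * ?P $ c $ b) + ?s / 2 * (?P $ a $ b * ?P $ c $ k))
           * dd (\<lambda>w. A w $ k $ c) v z)" for v
  proof -
    have dP: "dd (\<lambda>w. matrix_inv (A w) $ a $ b) v z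
        = - (\<Sum>c\<in>UNIV. \<Sum>k\<in>UNIV. ?P $ a $ k * dd (\<lambda>w. A w $ k $ c) v z * ?P $ c $ b)"
      by (rule dd_matrix_inv[OF S z A inv])
    show ?thesis
      unfolding dP by (subst (2) sum.swap)
        (simp add: sum_distrib_left sum_distrib_right sum_negf[symmetric] sum.distrib[symmetric] algebra_simps)
  qed
  ultimately show ?thesis by simp
qed

lemma skew_cyclic_contraction:
  fixes P :: "'k::finite \<Rightarrow> 'k \<Rightarrow> real" and T :: "'k \<Rightarrow> 'k \<Rightarrow> 'k \<Rightarrow> real"
  assumes P: "\<And>x y. P x y = - P y x" and T_skew: "\<And>k c b. T c k b = - T k c b"
    and T_cyclic: "\<And>k c b. T k c b + T c b k + T b k c = 0"
  shows "2 * (\<Sum>b\<in>UNIV. \<Sum>k\<in>UNIV. \<Sum>c\<in>UNIV. P a k * P c b * T k c b)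
       = (\<Sum>b\<in>UNIV. \<Sum>k\<in>UNIV. \<Sum>c\<in>UNIV. P a b * P c k * T k c b)"
proof -
  have rotate: "(\<Sum>b\<in>UNIV. \<Sum>k\<in>UNIV. \<Sum>c\<in>UNIV. F k c b) = (\<Sum>b\<in>UNIV. \<Sum>k\<in>UNIV. \<Sum>c\<in>UNIV. F b k c)"
    and reflect: "(\<Sum>b\<in>UNIV. \<Sum>k\<in>UNIV. \<Sum>c\<in>UNIV. F b k c) = (\<Sum>b\<in>UNIV. \<Sum>k\<in>UNIV. \<Sum>c\<in>UNIV. F c k b)"
    for F :: "'k \<Rightarrow> 'k \<Rightarrow> 'k \<Rightarrow> real"
  proof -
    show "(\<Sum>b\<in>UNIV. \<Sum>k\<in>UNIV. \<Sum>c\<in>UNIV. F k c b) = (\<Sum>b\<in>UNIV. \<Sum>k\<in>UNIV. \<Sum>c\<in>UNIV. F b k c)"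
      by (subst sum.swap) (rule sum.cong[OF refl], rule sum.swap)
    have "(\<Sum>b\<in>UNIV. \<Sum>k\<in>UNIV. \<Sum>c\<in>UNIV. F b k c) = (\<Sum>b\<in>UNIV. \<Sum>c\<in>UNIV. \<Sum>k\<in>UNIV. F b k c)"
      by (rule sum.cong[OF refl], rule sum.swap)
    also have "\<dots> = (\<Sum>c\<in>UNIV. \<Sum>b\<in>UNIV. \<Sum>k\<in>UNIV. F b k c)"
      by (rule sum.swap)
    also have "\<dots> = (\<Sum>c\<in>UNIV. \<Sum>k\<in>UNIV. \<Sum>b\<in>UNIV. F b k c)"
      by (rule sum.cong[OF refl], rule sum.swap)
    finally show "(\<Sum>b\<in>UNIV. \<Sum>k\<in>UNIV. \<Sum>c\<in>UNIV. F b k c) = (\<Sum>b\<in>UNIV. \<Sum>k\<in>UNIV. \<Sum>c\<in>UNIV. F c k b)" .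
  qed
  define B where "B = (\<Sum>b\<in>UNIV. \<Sum>k\<in>UNIV. \<Sum>c\<in>UNIV. P a k * P c b * T k c b)"
  define A where "A = (\<Sum>b\<in>UNIV. \<Sum>k\<in>UNIV. \<Sum>c\<in>UNIV. P a b * P c k * T k c b)"
  have T: "T k c b = - T c b k - T b k c" for k c b using T_cyclic[of k c b] by linarith
  have "B = (\<Sum>b\<in>UNIV. \<Sum>k\<in>UNIV. \<Sum>c\<in>UNIV. - (P a k * P c b * T c b k) - P a k * P c b * T b k c)"
    unfolding B_def by (subst T) (simp add: algebra_simps)
  also have "\<dots> = - (\<Sum>b\<in>UNIV. \<Sum>k\<in>UNIV. \<Sum>c\<in>UNIV. P a k * P c b * T c b k)
                 - (\<Sum>b\<in>UNIV. \<Sum>k\<in>UNIV. \<Sum>c\<in>UNIV. P a k * P c b * T b k c)"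
    by (simp only: sum_subtractf sum_negf)
  also have "(\<Sum>b\<in>UNIV. \<Sum>k\<in>UNIV. \<Sum>c\<in>UNIV. P a k * P c b * T c b k) = - A"
  proof -
    have summand: "P a b * P k c * T k c b = - (P a b * P c k * T k c b)" for b k c
      using P[of k c] by simp
    show ?thesis
      unfolding A_def rotate[of "\<lambda>b k c. P a b * P k c * T k c b"] by (simp only: summand sum_negf)
  qed
  also have "(\<Sum>b\<in>UNIV. \<Sum>k\<in>UNIV. \<Sum>c\<in>UNIV. P a k * P c b * T b k c) = B"
  proof -
    have summand: "P a k * P b c * T c k b = P a k * P c b * T k c b" for b k c
      using P[of b c] T_skew[of k c b] by simp
    show ?thesis
      unfolding B_def reflect[of "\<lambda>b k c. P a k * P c b * T b k c"] by (intro sum.cong refl summand)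
  qed
  finally show ?thesis unfolding A_def[symmetric] B_def[symmetric] by simp
qed

lemma dd_uminus: "f differentiable (at x) \<Longrightarrow> dd (\<lambda>y. - f y) v x = - dd f v x"
  by (rule dd_eqI) (intro has_derivative_minus has_derivative_dd)

lemma poisson_eq_neg_dd_ham_field:
  "f differentiable (at z) \<Longrightarrow> poisson f g z = - dd f (ham_field g z) z"
  by (simp add: poisson_skew[of f] poisson_eq_dd_ham_field)

lemma Gamma_entry: "(\<lambda>w. Gamma \<Xi> w $ c $ d) = poisson (\<lambda>w. \<Xi> w $ c) (\<lambda>w. \<Xi> w $ d)"
  by (simp add: fun_eq_iff Gamma_def)

lemma transpose_Gamma: "transpose (Gamma \<Xi> z) = - Gamma \<Xi> z"
  by (auto simp: vec_eq_iff transpose_def Gamma_def intro: poisson_skew)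

lemma poisson_sqrt_det_Gamma_inverse:
  fixes \<Xi> :: "(real^'n) \<times> (real^'n) \<Rightarrow> real^'k"
  assumes U: "open U" and z: "z \<in> U" and \<Xi>: "\<And>c. ck_on 2 U (\<lambda>w. \<Xi> w $ c)"
    and inv: "\<And>w. w \<in> U \<Longrightarrow> invertible (Gamma \<Xi> w)"
  shows "(\<Sum>b\<in>UNIV. poisson (\<lambda>w. sqrt \<bar>det (Gamma \<Xi> w)\<bar> * matrix_inv (Gamma \<Xi> w) $ a $ b)
           (\<lambda>w. \<Xi> w $ b) z) = 0"
proof -
  define P where "P = matrix_inv (Gamma \<Xi> z)"
  define s where "s = sqrt \<bar>det (Gamma \<Xi> z)\<bar>"
  define T where "T k c b = poisson (\<lambda>w. Gamma \<Xi> w $ k $ c) (\<lambda>w. \<Xi> w $ b) z" for k c b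
  define coef where "coef b k c = - s * (P $ a $ k * P $ c $ b) + s / 2 * (P $ a $ b * P $ c $ k)" for b k c
  have G_ck: "ck_on 1 U (\<lambda>w. Gamma \<Xi> w $ k $ c)" for k c
    unfolding Gamma_entry using \<Xi> by (intro ck_on_poisson[OF U]) (simp_all add: numeral_2_eq_2)
  then have G_diff: "(\<lambda>w. Gamma \<Xi> w $ k $ c) differentiable (at z)" for k c
    using z by simp
  have H_deriv: "((\<lambda>w. sqrt \<bar>det (Gamma \<Xi> w)\<bar> * matrix_inv (Gamma \<Xi> w) $ a $ b) has_derivative
      (\<lambda>v. \<Sum>k\<in>UNIV. \<Sum>c\<in>UNIV. coef b k c * dd (\<lambda>w. Gamma \<Xi> w $ k $ c) v z)) (at z)" for b
    unfolding coef_def s_def P_def by (rule has_derivative_sqrt_abs_det_matrix_inv[OF U z G_ck inv])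
  have poisson_H: "poisson (\<lambda>w. sqrt \<bar>det (Gamma \<Xi> w)\<bar> * matrix_inv (Gamma \<Xi> w) $ a $ b) (\<lambda>w. \<Xi> w $ b) z
      = (\<Sum>k\<in>UNIV. \<Sum>c\<in>UNIV. coef b k c * T k c b)" for b
  proof -
    let ?X = "ham_field (\<lambda>w. \<Xi> w $ b) z"
    have "(\<lambda>w. sqrt \<bar>det (Gamma \<Xi> w)\<bar> * matrix_inv (Gamma \<Xi> w) $ a $ b) differentiable (at z)"
      using H_deriv[of b] unfolding differentiable_def by blast
    then have "poisson (\<lambda>w. sqrt \<bar>det (Gamma \<Xi> w)\<bar> * matrix_inv (Gamma \<Xi> w) $ a $ b) (\<lambda>w. \<Xi> w $ b) z
        = - (\<Sum>k\<in>UNIV. \<Sum>c\<in>UNIV. coef b k c * dd (\<lambda>w. Gamma \<Xi> w $ k $ c) ?X z)"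
      by (simp only: poisson_eq_neg_dd_ham_field dd_eqI[OF H_deriv])
    then show ?thesis
      by (simp add: T_def poisson_eq_neg_dd_ham_field[OF G_diff] sum_negf[symmetric])
  qed
  have P_skew: "P $ x $ y = - P $ y $ x" for x y
    unfolding P_def by (rule matrix_inv_skew[OF inv[OF z] transpose_Gamma])
  have T_skew: "T c k b = - T k c b" for k c b
  proof -
    have "(\<lambda>w. Gamma \<Xi> w $ c $ k) = (\<lambda>w. - Gamma \<Xi> w $ k $ c)"
      by (auto simp: fun_eq_iff Gamma_def intro: poisson_skew)
    then show ?thesis
      by (simp add: T_def poisson_eq_neg_dd_ham_field G_diff dd_uminus)
  qed
  have T_cyclic: "T k c b + T c b k + T b k c = 0" for k c b
    unfolding T_def Gamma_entry by (rule poisson_jacobi[OF U z \<Xi> \<Xi> \<Xi>])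
  have "(\<Sum>b\<in>UNIV. \<Sum>k\<in>UNIV. \<Sum>c\<in>UNIV. coef b k c * T k c b)
      = (\<Sum>b\<in>UNIV. \<Sum>k\<in>UNIV. \<Sum>c\<in>UNIV.
          (- s) * (P $ a $ k * P $ c $ b * T k c b) + s / 2 * (P $ a $ b * P $ c $ k * T k c b))"
    by (intro sum.cong refl) (simp add: coef_def algebra_simps)
  also have "\<dots> = - s * (\<Sum>b\<in>UNIV. \<Sum>k\<in>UNIV. \<Sum>c\<in>UNIV. P $ a $ k * P $ c $ b * T k c b)
        + s / 2 * (\<Sum>b\<in>UNIV. \<Sum>k\<in>UNIV. \<Sum>c\<in>UNIV. P $ a $ b * P $ c $ k * T k c b)"
    by (simp only: sum.distrib sum_distrib_left)
  also have "\<dots> = 0"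
    using skew_cyclic_contraction[where P="\<lambda>x y. P $ x $ y" and T=T and a=a, OF P_skew T_skew T_cyclic] by simp
  finally show ?thesis by (simp add: poisson_H)
qed

lemma ck_on_constraints:
  fixes \<xi> :: "real^'n \<Rightarrow> real^'m" and M :: "real^'n^'n" and \<Xi> :: "(real^'n) \<times> (real^'n) \<Rightarrow> real^('m + 'm)"
  assumes smooth: "\<forall>j. smooth_fun (\<lambda>q. \<xi> q $ j)" and U: "open U"
    and G_inv: "\<forall>q p. (q, p) \<in> U \<longrightarrow> invertible (G_M \<xi> M q)"
    and \<Xi>: "\<Xi> = Xi_v \<xi> M \<or> \<Xi> = Xi_p \<xi> M"
  shows "ck_on k U (\<lambda>w. \<Xi> w $ c)"
proof -
  have \<xi>_ck: "ck_on k U (\<lambda>w. \<xi> (fst w) $ j)" for j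
    using smooth unfolding smooth_fun_def by (intro ck_on_compose_linear bounded_linear_fst U) blast
  have d\<xi>_ck: "ck_on k U (\<lambda>w. dd (\<lambda>q. \<xi> q $ j) u (fst w))" for j u
  proof (rule ck_on_compose_linear[OF _ bounded_linear_fst U])
    show "Ck k (\<lambda>x. dd (\<lambda>q. \<xi> q $ j) u x)"
      using smooth unfolding smooth_fun_def by (metis Ck.simps(2))
  qed
  have p_ck: "ck_on k U (\<lambda>w. (A *v snd w) $ i)" for A :: "real^'n^'n" and i
    unfolding matrix_vector_mult_def
    by (simp, intro ck_on_sum[OF U] ck_on_mult[OF U] ck_on_const ck_on_linear
        bounded_linear_compose[OF bounded_linear_vec_nth bounded_linear_snd])
  have v_ck: "ck_on k U (\<lambda>w. v_xi \<xi> M (fst w) (snd w) $ j)" for j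
    unfolding v_xi_def grad_xi_def inner_vec_def
    by (simp, intro ck_on_sum[OF U] ck_on_mult[OF U] d\<xi>_ck p_ck)
  have G_ck: "ck_on k U (\<lambda>w. G_M \<xi> M (fst w) $ j $ l)" for j l
    unfolding G_M_def grad_xi_def inner_vec_def matrix_vector_mult_def
    by (simp, intro ck_on_sum[OF U] ck_on_mult[OF U] d\<xi>_ck ck_on_const)
  have "invertible (G_M \<xi> M (fst w))" if "w \<in> U" for w
    using G_inv that by (cases w) auto
  then have "ck_on k U (\<lambda>w. matrix_inv (G_M \<xi> M (fst w)) $ j $ l)" for j l
    by (rule ck_on_matrix_inv[OF U G_ck])
  then have "ck_on k U (\<lambda>w. p_xi \<xi> M (fst w) (snd w) $ j)" for j
    unfolding p_xi_def matrix_vector_mult_def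
    by (simp, intro ck_on_sum[OF U] ck_on_mult[OF U] v_ck)
  then show ?thesis
    using \<Xi> \<xi>_ck v_ck by (cases c) (auto simp: Xi_v_def Xi_p_def)
qed

theorem mainTheorem13:
  fixes N :: nat
    and \<xi> :: "real^'n \<Rightarrow> real^'m"
    and M :: "real^'n^'n"
    and \<Xi> :: "(real^'n) \<times> (real^'n) \<Rightarrow> real^('m + 'm)"
    and U :: "((real^'n) \<times> (real^'n)) set"
  assumes dim: "CARD('n) = 3 * N"
    and smooth: "\<forall>j. smooth_fun (\<lambda>q. \<xi> q $ j)"
    and M_sym: "transpose M = M"
    and M_pd: "\<forall>x. x \<noteq> 0 \<longrightarrow> x \<bullet> (M *v x) > 0"
    and G_inv: "\<forall>q p. (q, p) \<in> U \<longrightarrow> invertible (G_M \<xi> M q)"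
    and Xi_choice: "\<Xi> = Xi_v \<xi> M \<or> \<Xi> = Xi_p \<xi> M"
    and U_open: "open U"
    and Gamma_inv: "\<forall>z\<in>U. invertible (Gamma \<Xi> z)"
  shows "\<forall>z\<in>U. \<forall>a. (\<Sum>b\<in>UNIV.
           poisson (\<lambda>w. sqrt \<bar>det (Gamma \<Xi> w)\<bar> * matrix_inv (Gamma \<Xi> w) $ a $ b)
                   (\<lambda>w. \<Xi> w $ b) z) = 0"
  using poisson_sqrt_det_Gamma_inverse[OF U_open _ ck_on_constraints[OF smooth U_open G_inv Xi_choice]]
    Gamma_inv by blast

end
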